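(* In a realisation of a local affine Gaudin model (setting below), let $\mathcal Q(z)=-\frac{1}{2\varphi(z)}\int_{\mathbb D}dx\,\kappa\big(\Gamma(z,x),\Gamma(z,x)\big)$. Then $\mathcal Q(z)=-\sum_{\alpha\in\Sigma}\sum_{p=0}^{m_\alpha-1}\frac{\mathcal D^\alpha_{[p]}}{(z-z_\alpha)^{p+1}}+\mathcal Q_{\rm reg}(z)$, where $\mathcal Q_{\rm reg}(z)$ is regular at all positions $z_\alpha$, $\alpha\in\Sigma$.
   Context: $\mathfrak g$: finite-dimensional simple complex Lie algebra, $\kappa$: minus its Killing form, $C_{12}=I_a\otimes I^a$ for dual bases w.r.t. $\kappa$; $\mathfrak g_0$: real form, fixed points of an antilinear involution $\tau$. $\mathbb D$ is $\mathbb R$ or the circle; $\delta'_{xy}=\partial_x\delta(x-y)$. Data: a finite set of sites $\Sigma=\Sigma_r\sqcup\Sigma_c\sqcup\bar\Sigma_c$ (real sites, complex sites, their conjugates $\bar\alpha$), multiplicities $m_\alpha\ge1$ ($m_{\bar\alpha}=m_\alpha$), levels $\ell^\alpha_{[p]}$, $0\le p\le m_\alpha-1$ (real for real sites, $\ell^{\bar\alpha}_{[p]}=\overline{\ell^\alpha_{[p]}}$), with $\ell^\alpha_{[m_\alpha-1]}\neq0$; pairwise distinct positions $z_\alpha$ (real for real sites, $z_{\bar\alpha}=\overline{z_\alpha}$); a real $\ell^\infty\neq0$. A realisation is a Poisson algebra $\mathcal A$ of local observables of a field theory on $\mathbb D$ containing $\mathfrak g$-valued fields $\mathcal J^\alpha_{[p]}(x)$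 with $\{\mathcal J^\alpha_{[p]}{}_1(x),\mathcal J^\beta_{[q]}{}_2(y)\}=\delta_{\alpha\beta}([C_{12},\mathcal J^\alpha_{[p+q]}{}_1(x)]\delta_{xy}-\ell^\alpha_{[p+q]}C_{12}\delta'_{xy})$ if $p+q<m_\alpha$ and $0$ otherwise, with reality conditions $\tau(\mathcal J^\alpha_{[p]})=\mathcal J^\alpha_{[p]}$ (real $\alpha$), $\tau(\mathcal J^\alpha_{[p]})=\mathcal J^{\bar\alpha}_{[p]}$ (complex $\alpha$). Twist function $\varphi(z)=\sum_{\alpha\in\Sigma}\sum_{p=0}^{m_\alpha-1}\frac{\ell^\alpha_{[p]}}{(z-z_\alpha)^{p+1}}-\ell^\infty$; Gaudin Lax matrix $\Gamma(z,x)=\sum_\alpha\sum_p\frac{\mathcal J^\alpha_{[p]}(x)}{(z-z_\alpha)^{p+1}}$. For each $\alpha$, $\eta^\alpha_{[p]}$ ($0\le p\le 2m_\alpha-2$) denotes the unique solution of $\sum_{p=0}^{m_\alpha-1-r}\eta^\alpha_{[p+q]}\ell^\alpha_{[p+r]}=\delta_{q,r}$ for all $q,r\in\{0,\dots,m_\alpha-1\}$, and $\mathcal D^\alpha_{[p]}=\frac12\sum_{q,r=0,\,q+r\ge p}^{m_\alpha-1}\eta^\alpha_{[q+r-p]}\int_{\mathbb D}dx\,\kappa(\mathcal J^\alpha_{[q]}(x),\mathcal J^\alpha_{[r]}(x))$. *)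

theory Defs
  imports "HOL-Analysis.Analysis"
begin

text \<open>The complexified Lie algebra g is modelled as complex^'n (coordinates w.r.t. a basis);
  the invariant form kappa is given by a symmetric complex matrix Bk.\<close>

definition kappa :: "complex^'n^'n \<Rightarrow> complex^'n \<Rightarrow> complex^'n \<Rightarrow> complex" where
  "kappa Bk v w = (\<Sum>i\<in>UNIV. \<Sum>j\<in>UNIV. v$i * Bk$i$j * w$j)"

definition twist :: "'s set \<Rightarrow> ('s \<Rightarrow> nat) \<Rightarrow> ('s \<Rightarrow> nat \<Rightarrow> complex) \<Rightarrow> ('s \<Rightarrow> complex)
    \<Rightarrow> real \<Rightarrow> complex \<Rightarrow> complex" where
  "twist S m lev zpos linf w =
     (\<Sum>\<alpha>\<in>S. \<Sum>p<m \<alpha>. lev \<alpha> p / (w - zpos \<alpha>) ^ (p + 1)) - complex_of_real linf"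

definition gaudin_lax :: "'s set \<Rightarrow> ('s \<Rightarrow> nat) \<Rightarrow> ('s \<Rightarrow> complex)
    \<Rightarrow> ('s \<Rightarrow> nat \<Rightarrow> real \<Rightarrow> complex^'n) \<Rightarrow> complex \<Rightarrow> real \<Rightarrow> complex^'n" where
  "gaudin_lax S m zpos J w x =
     (\<Sum>\<alpha>\<in>S. \<Sum>p<m \<alpha>. (1 / (w - zpos \<alpha>) ^ (p + 1)) *s J \<alpha> p x)"

definition eta_coeffs :: "nat \<Rightarrow> (nat \<Rightarrow> complex) \<Rightarrow> nat \<Rightarrow> complex" where
  "eta_coeffs mm lv = (THE \<eta>. (\<forall>k. 2 * mm - 2 < k \<longrightarrow> \<eta> k = 0) \<and>
      (\<forall>q<mm. \<forall>r<mm. (\<Sum>p\<le>mm - 1 - r. \<eta> (p + q) * lv (p + r)) = (if q = r then 1 else 0)))"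

definition charge_D :: "real measure \<Rightarrow> complex^'n^'n \<Rightarrow> ('s \<Rightarrow> nat) \<Rightarrow> ('s \<Rightarrow> nat \<Rightarrow> complex)
    \<Rightarrow> ('s \<Rightarrow> nat \<Rightarrow> real \<Rightarrow> complex^'n) \<Rightarrow> 's \<Rightarrow> nat \<Rightarrow> complex" where
  "charge_D M Bk m lev J \<alpha> p =
     (1/2) * (\<Sum>q<m \<alpha>. \<Sum>r<m \<alpha>. (if p \<le> q + r then
        eta_coeffs (m \<alpha>) (lev \<alpha>) (q + r - p) * integral\<^sup>L M (\<lambda>x. kappa Bk (J \<alpha> q x) (J \<alpha> r x))
      else 0))"

definition charge_Q :: "real measure \<Rightarrow> complex^'n^'n \<Rightarrow> 's set \<Rightarrow> ('s \<Rightarrow> nat)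
    \<Rightarrow> ('s \<Rightarrow> nat \<Rightarrow> complex) \<Rightarrow> ('s \<Rightarrow> complex) \<Rightarrow> real
    \<Rightarrow> ('s \<Rightarrow> nat \<Rightarrow> real \<Rightarrow> complex^'n) \<Rightarrow> complex \<Rightarrow> complex" where
  "charge_Q M Bk S m lev zpos linf J w =
     - (1 / (2 * twist S m lev zpos linf w)) *
       integral\<^sup>L M (\<lambda>x. kappa Bk (gaudin_lax S m zpos J w x) (gaudin_lax S m zpos J w x))"

end

theory Submission
  imports Defs
begin

text \<open>Fix a site \<alpha>, put n = m \<alpha> and u = w - zpos \<alpha>. Multiplying a pole 1 / (w - zpos \<beta>)^(p+1)
  by u^n gives a function holomorphic near zpos \<alpha> which is u^(n-1-p) for \<beta> = \<alpha> and divisible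
  by u^n otherwise. Hence, near zpos \<alpha>, the twist function, the energy integral of
  kappa(Gamma, Gamma) and the sum of the terms D/(w - zpos \<beta>)^(p+1) are Phi/u^n, Psi/u^(2n)
  and Delta/u^n with Phi, Psi, Delta holomorphic and Phi(zpos \<alpha>) = lev \<alpha> (n-1) \<noteq> 0, so that
  Q + \<Sum> D/(w - zpos \<beta>)^(p+1) = (Phi Delta - Psi/2) / (u^n Phi).
  Modulo u^n only the \<alpha>-block survives in the numerator: with Lambda = rev_poly n (lev \<alpha>) and
  K q r the integral of kappa(J \<alpha> q, J \<alpha> r), it is
  Lambda(u) * (\<Sum>p. D \<alpha> p * u^(n-1-p)) - 1/2 * (\<Sum>q r. K q r * u^(2n-2-q-r)).
  The defining system of \<eta> says that \<eta>(n-1), ..., \<eta>(2n-2) are the first coefficients of the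
  power series inverse of Lambda, and this makes the combination divisible by u^n. The quotient is a holomorphic representative of the left-hand side near
  zpos \<alpha>; these local representatives glue to Qreg.\<close>

section \<open>The coefficients \<eta> and the inverse power series\<close>

definition eta_system :: "nat \<Rightarrow> (nat \<Rightarrow> complex) \<Rightarrow> (nat \<Rightarrow> complex) \<Rightarrow> bool" where
  "eta_system n lv \<eta> \<longleftrightarrow> (\<forall>k. 2 * n - 2 < k \<longrightarrow> \<eta> k = 0) \<and>
      (\<forall>q<n. \<forall>r<n. (\<Sum>p\<le>n - 1 - r. \<eta> (p + q) * lv (p + r)) = (if q = r then 1 else 0))"

definition rev_poly :: "nat \<Rightarrow> (nat \<Rightarrow> 'a::comm_ring_1) \<Rightarrow> 'a poly" where
  "rev_poly n c = (\<Sum>p<n. monom (c p) (n - 1 - p))"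

lemma coeff_rev_poly: "coeff (rev_poly n c) i = (if i < n then c (n - 1 - i) else 0)"
proof -
  have "coeff (rev_poly n c) i = (\<Sum>p<n. if p = n - 1 - i \<and> i < n then c p else 0)"
    unfolding rev_poly_def coeff_sum by (intro sum.cong) auto
  then show ?thesis by simp
qed

lemma poly_rev_poly: "poly (rev_poly n c) u = (\<Sum>p<n. c p * u ^ (n - 1 - p))"
  by (simp add: rev_poly_def poly_sum poly_monom)

lemma rev_poly_cong: "(\<And>p. p < n \<Longrightarrow> c p = d p) \<Longrightarrow> rev_poly n c = rev_poly n d"
  unfolding rev_poly_def by (intro sum.cong) auto

lemma coeff_rev_poly_mult:
  assumes "e < n"
  shows "coeff (rev_poly n c * rev_poly n d) e = (\<Sum>p\<le>e. c (n - 1 - e + p) * d (n - 1 - p))"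
proof -
  have "coeff (rev_poly n c * rev_poly n d) e = (\<Sum>i\<le>e. c (n - 1 - i) * d (n - 1 - (e - i)))"
    unfolding coeff_mult coeff_rev_poly using assms by (intro sum.cong) auto
  also have "\<dots> = (\<Sum>p\<le>e. c (n - 1 - e + p) * d (n - 1 - p))"
    by (rule sum.reindex_bij_witness[where i="\<lambda>p. e - p" and j="\<lambda>i. e - i"]) (use assms in auto)
  finally show ?thesis .
qed

lemma monom_1_dvd_mult_truncate_fps:
  "monom 1 k dvd (p * truncate_fps k F - truncate_fps k (fps_of_poly p * F))"
  unfolding monom_1_dvd_iff'
proof (intro allI impI)
  fix i assume "i < k"
  then have "coeff (p * truncate_fps k F) i = (\<Sum>j=0..i. coeff p j * fps_nth F (i - j))"
    by (auto simp: coeff_mult atLeast0AtMost intro!: sum.cong)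
  with \<open>i < k\<close> show "coeff (p * truncate_fps k F - truncate_fps k (fps_of_poly p * F)) i = 0"
    by (simp add: fps_mult_nth)
qed

lemma truncate_fps_Suc_1: "truncate_fps (Suc k) 1 = 1"
  by (rule poly_eqI) (auto simp: coeff_truncate_fps)

lemma eta_system_iff_congruence:
  "eta_system n lv \<eta> \<longleftrightarrow> (\<forall>k. 2 * n - 2 < k \<longrightarrow> \<eta> k = 0) \<and>
     (\<forall>q<n. monom 1 n dvd (rev_poly n lv * rev_poly n (\<lambda>p. \<eta> (q + n - 1 - p)) - monom 1 (n - 1 - q)))"
proof -
  let ?R = "\<lambda>q. rev_poly n lv * rev_poly n (\<lambda>p. \<eta> (q + n - 1 - p)) - monom 1 (n - 1 - q)"
  let ?eq = "\<lambda>q r. (\<Sum>p\<le>n - 1 - r. \<eta> (p + q) * lv (p + r)) = (if q = r then 1 else 0)"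
  have coeff_R: "coeff (?R q) (n - 1 - r) = (\<Sum>p\<le>n - 1 - r. \<eta> (p + q) * lv (p + r)) - (if q = r then 1 else 0)"
    if "q < n" "r < n" for q r
    using that by (subst coeff_diff, subst coeff_rev_poly_mult) (auto simp: mult.commute add.commute intro!: sum.cong)
  have "(\<forall>r<n. ?eq q r) \<longleftrightarrow> monom 1 n dvd ?R q" if q: "q < n" for q
    unfolding monom_1_dvd_iff'
  proof (intro iffI allI impI)
    fix e assume "\<forall>r<n. ?eq q r" and e: "e < n"
    then show "coeff (?R q) e = 0" using coeff_R[OF q, of "n - 1 - e"] by (auto dest!: spec[of _ "n - 1 - e"])
  next
    fix r assume "\<forall>e<n. coeff (?R q) e = 0" and r: "r < n"
    then show "?eq q r" using coeff_R[OF q r] by (auto dest!: spec[of _ "n - 1 - r"])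
  qed
  then show ?thesis unfolding eta_system_def by auto
qed

lemma eta_system_exists:
  assumes top: "lv (n - 1) \<noteq> 0"
  shows "\<exists>\<eta>. eta_system n lv \<eta>"
proof -
  define c where "c = inverse (fps_of_poly (rev_poly n lv))"
  define \<eta> where "\<eta> k = (if n - 1 \<le> k \<and> k \<le> 2 * n - 2 then fps_nth c (k - (n - 1)) else 0)" for k
  have "monom 1 n dvd (rev_poly n lv * rev_poly n (\<lambda>p. \<eta> (q + n - 1 - p)) - monom 1 (n - 1 - q))"
    if q: "q < n" for q
  proof -
    have inv: "fps_of_poly (rev_poly n lv) * c = 1"
      unfolding c_def using top q by (intro inverse_mult_eq_1') (simp add: coeff_rev_poly)
    have shift: "rev_poly n (\<lambda>p. \<eta> (q + n - 1 - p)) = monom 1 (n - 1 - q) * truncate_fps (q + 1) c"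
      by (rule poly_eqI) (use q in \<open>auto simp: coeff_rev_poly coeff_monom_mult coeff_truncate_fps \<eta>_def add.commute\<close>)
    have "rev_poly n lv * rev_poly n (\<lambda>p. \<eta> (q + n - 1 - p)) - monom 1 (n - 1 - q) =
        monom 1 (n - 1 - q) * (rev_poly n lv * truncate_fps (q + 1) c
          - truncate_fps (q + 1) (fps_of_poly (rev_poly n lv) * c))"
      unfolding shift inv by (simp add: truncate_fps_Suc_1 algebra_simps)
    moreover have "monom 1 n = monom 1 (n - 1 - q) * monom (1::complex) (q + 1)"
      using q by (simp add: mult_monom)
    ultimately show ?thesis
      by (simp add: mult_dvd_mono monom_1_dvd_mult_truncate_fps)
  qed
  moreover have "\<forall>k. 2 * n - 2 < k \<longrightarrow> \<eta> k = 0" by (simp add: \<eta>_def)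
  ultimately show ?thesis unfolding eta_system_iff_congruence by blast
qed

lemma eta_system_unique:
  assumes n: "0 < n" and top: "lv (n - 1) \<noteq> 0" and \<eta>1: "eta_system n lv \<eta>1" and \<eta>2: "eta_system n lv \<eta>2"
  shows "\<eta>1 = \<eta>2"
proof
  fix j show "\<eta>1 j = \<eta>2 j"
  proof (induction j rule: less_induct)
    case (less j)
    show ?case
    proof (cases "2 * n - 2 < j")
      case True
      then show ?thesis using \<eta>1 \<eta>2 by (simp add: eta_system_def)
    next
      case False
      \<comment> \<open>the equation for (q, r) with q + (n - 1 - r) = j determines \<eta> j from smaller indices\<close>
      define q where "q = min j (n - 1)"
      define r where "r = n - 1 + q - j"
      have q: "q < n" and r: "r < n" and last: "n - 1 - r = j - q" "j - q + r = n - 1" "j - q + q = j"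
        using False n by (auto simp: q_def r_def)
      have split: "(\<Sum>p\<le>n - 1 - r. \<eta> (p + q) * lv (p + r)) =
          (\<Sum>p<j - q. \<eta> (p + q) * lv (p + r)) + \<eta> j * lv (n - 1)" for \<eta>
        unfolding last(1) by (simp add: lessThan_Suc_atMost[symmetric] last)
      have "(\<Sum>p<j - q. \<eta>1 (p + q) * lv (p + r)) = (\<Sum>p<j - q. \<eta>2 (p + q) * lv (p + r))"
        by (intro sum.cong refl) (simp add: less.IH)
      moreover have "(\<Sum>p\<le>n - 1 - r. \<eta>1 (p + q) * lv (p + r)) = (\<Sum>p\<le>n - 1 - r. \<eta>2 (p + q) * lv (p + r))"
        using \<eta>1 \<eta>2 q r by (simp add: eta_system_def)
      ultimately have "\<eta>1 j * lv (n - 1) = \<eta>2 j * lv (n - 1)" unfolding split by simp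
      then show ?thesis using top by simp
    qed
  qed
qed

lemma eta_coeffs_eta_system:
  assumes "0 < n" and "lv (n - 1) \<noteq> 0"
  shows "eta_system n lv (eta_coeffs n lv)"
proof -
  have "\<exists>!\<eta>. eta_system n lv \<eta>"
    using eta_system_exists[of lv n] eta_system_unique[of n lv] assms by blast
  then show ?thesis
    unfolding eta_coeffs_def eta_system_def[abs_def] by (rule theI')
qed

lemma eta_system_vanishes_below:
  assumes top: "lv (n - 1) \<noteq> 0" and \<eta>: "eta_system n lv \<eta>" and k: "k < n - 1"
  shows "\<eta> k = 0"
proof -
  have "(\<Sum>p\<le>n - 1 - (n - 1). \<eta> (p + k) * lv (p + (n - 1))) = (if k = n - 1 then 1 else 0)"
  proof -
    have "k < n" "n - 1 < n" using k by auto
    then show ?thesis using \<eta> unfolding eta_system_def by blast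
  qed
  then show ?thesis using k top by simp
qed

lemma eta_tail_congruence:
  assumes n: "0 < n" and top: "lv (n - 1) \<noteq> 0" and \<eta>: "eta_system n lv \<eta>" and t: "t \<le> 2 * n - 2"
  shows "monom 1 n dvd
    (rev_poly n lv * rev_poly n (\<lambda>p. if p \<le> t then \<eta> (t - p) else 0) - monom 1 (2 * n - 2 - t))"
proof (cases "n - 1 \<le> t")
  case True
  define q where "q = t - (n - 1)"
  have q: "q < n" and exp: "2 * n - 2 - t = n - 1 - q" using True t n unfolding q_def by linarith+
  have "rev_poly n (\<lambda>p. if p \<le> t then \<eta> (t - p) else 0) = rev_poly n (\<lambda>p. \<eta> (q + n - 1 - p))"
    using True by (intro rev_poly_cong) (auto simp: q_def intro!: arg_cong[where f=\<eta>])
  moreover have "monom 1 n dvd (rev_poly n lv * rev_poly n (\<lambda>p. \<eta> (q + n - 1 - p)) - monom 1 (n - 1 - q))"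
    using \<eta> q unfolding eta_system_iff_congruence by blast
  ultimately show ?thesis unfolding exp by simp
next
  case False
  have "rev_poly n (\<lambda>p. if p \<le> t then \<eta> (t - p) else 0) = rev_poly n (\<lambda>_. 0)"
    using False by (intro rev_poly_cong) (auto intro: eta_system_vanishes_below[OF top \<eta>])
  moreover have "monom 1 n dvd monom (1::complex) (2 * n - 2 - t)"
    using False by (auto simp: monom_1_dvd_iff')
  ultimately show ?thesis by (simp add: rev_poly_def)
qed

lemma charge_principal_identity:
  fixes K :: "nat \<Rightarrow> nat \<Rightarrow> complex"
  assumes n: "0 < n" and top: "lv (n - 1) \<noteq> 0" and \<eta>: "eta_system n lv \<eta>"
  shows "\<exists>W. \<forall>u. - (1/2) * (\<Sum>q<n. \<Sum>r<n. K q r * (u ^ (n - 1 - q) * u ^ (n - 1 - r)))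
      + poly (rev_poly n lv) u *
        (\<Sum>p<n. (1/2) * (\<Sum>q<n. \<Sum>r<n. if p \<le> q + r then \<eta> (q + r - p) * K q r else 0) * u ^ (n - 1 - p))
    = u ^ n * poly W u"
proof -
  define E where "E t = rev_poly n (\<lambda>p. if p \<le> t then \<eta> (t - p) else 0)" for t
  define P where "P = (\<Sum>q<n. \<Sum>r<n. smult (K q r / 2) (rev_poly n lv * E (q + r) - monom 1 (2 * n - 2 - (q + r))))"
  have "monom 1 n dvd P"
    unfolding P_def E_def using eta_tail_congruence[OF n top \<eta>]
    by (intro dvd_sum dvd_smult) auto
  then obtain W where W: "P = monom 1 n * W" by (elim dvdE)
  have "- (1/2) * (\<Sum>q<n. \<Sum>r<n. K q r * (u ^ (n - 1 - q) * u ^ (n - 1 - r)))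
      + poly (rev_poly n lv) u *
        (\<Sum>p<n. (1/2) * (\<Sum>q<n. \<Sum>r<n. if p \<le> q + r then \<eta> (q + r - p) * K q r else 0) * u ^ (n - 1 - p))
    = poly P u" for u
  proof -
    have T: "(\<Sum>q<n. \<Sum>r<n. K q r * (u ^ (n - 1 - q) * u ^ (n - 1 - r)))
        = (\<Sum>q<n. \<Sum>r<n. K q r * u ^ (2 * n - 2 - (q + r)))"
    proof (intro sum.cong refl arg_cong[where f="\<lambda>x. K _ _ * x"])
      fix q r assume "q \<in> {..<n}" "r \<in> {..<n}"
      then have "(n - 1 - q) + (n - 1 - r) = 2 * n - 2 - (q + r)" by simp
      then show "u ^ (n - 1 - q) * u ^ (n - 1 - r) = u ^ (2 * n - 2 - (q + r))"
        by (simp only: power_add[symmetric])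
    qed
    have "(\<Sum>p<n. (1/2) * (\<Sum>q<n. \<Sum>r<n. if p \<le> q + r then \<eta> (q + r - p) * K q r else 0) * u ^ (n - 1 - p))
        = (\<Sum>p<n. \<Sum>q<n. \<Sum>r<n. K q r / 2 * (if p \<le> q + r then \<eta> (q + r - p) else 0) * u ^ (n - 1 - p))"
      by (simp add: sum_distrib_left sum_distrib_right) (intro sum.cong refl; simp)
    also have "\<dots> = (\<Sum>q<n. \<Sum>r<n. \<Sum>p<n. K q r / 2 * (if p \<le> q + r then \<eta> (q + r - p) else 0) * u ^ (n - 1 - p))"
      by (subst sum.swap, rule sum.cong[OF refl], rule sum.swap)
    also have "\<dots> = (\<Sum>q<n. \<Sum>r<n. K q r / 2 * poly (E (q + r)) u)"
      by (simp add: E_def poly_rev_poly sum_distrib_left mult.assoc)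
    finally have Va: "(\<Sum>p<n. (1/2) * (\<Sum>q<n. \<Sum>r<n. if p \<le> q + r then \<eta> (q + r - p) * K q r else 0) * u ^ (n - 1 - p))
        = (\<Sum>q<n. \<Sum>r<n. K q r / 2 * poly (E (q + r)) u)" .
    show ?thesis
      unfolding P_def T Va
      by (simp add: poly_sum poly_monom sum_distrib_left right_diff_distrib sum_subtractf
          sum_divide_distrib sum_negf mult_ac)
  qed
  then show ?thesis using W by (auto simp: poly_monom)
qed

section \<open>The energy integral as a finite sum\<close>

lemma kappa_add_left: "kappa Bk (v + v') w = kappa Bk v w + kappa Bk v' w"
  unfolding kappa_def by (simp add: distrib_right sum.distrib)

lemma kappa_add_right: "kappa Bk v (w + w') = kappa Bk v w + kappa Bk v w'"
  unfolding kappa_def by (simp add: distrib_left sum.distrib)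

lemma kappa_scale_left: "kappa Bk (c *s v) w = c * kappa Bk v w"
  unfolding kappa_def by (simp add: sum_distrib_left mult_ac)

lemma kappa_scale_right: "kappa Bk v (c *s w) = c * kappa Bk v w"
  unfolding kappa_def by (simp add: sum_distrib_left mult_ac)

lemma kappa_zero_left: "kappa Bk 0 w = 0"
  by (simp add: kappa_def)

lemma kappa_zero_right: "kappa Bk v 0 = 0"
  by (simp add: kappa_def)

lemma kappa_sum_left: "kappa Bk (\<Sum>i\<in>A. v i) w = (\<Sum>i\<in>A. kappa Bk (v i) w)"
  by (induction A rule: infinite_finite_induct) (auto simp: kappa_add_left kappa_zero_left)

lemma kappa_sum_right: "kappa Bk v (\<Sum>i\<in>A. w i) = (\<Sum>i\<in>A. kappa Bk v (w i))"
  by (induction A rule: infinite_finite_induct) (auto simp: kappa_add_right kappa_zero_right)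

lemma kappa_gaudin_lax:
  "kappa Bk (gaudin_lax S m zpos J w x) (gaudin_lax S m zpos J w x) =
    (\<Sum>\<beta>\<in>S. \<Sum>p<m \<beta>. \<Sum>\<gamma>\<in>S. \<Sum>q<m \<gamma>.
      (1 / (w - zpos \<beta>) ^ (p + 1) * (1 / (w - zpos \<gamma>) ^ (q + 1))) * kappa Bk (J \<beta> p x) (J \<gamma> q x))"
  unfolding gaudin_lax_def
  by (simp only: kappa_sum_left kappa_scale_left)
    (simp only: kappa_sum_right kappa_scale_right sum_distrib_left mult.assoc)

lemma integral_kappa_gaudin_lax:
  assumes "\<forall>\<alpha>\<in>S. \<forall>\<beta>\<in>S. \<forall>p<m \<alpha>. \<forall>q<m \<beta>. integrable M (\<lambda>x. kappa Bk (J \<alpha> p x) (J \<beta> q x))"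
  shows "integral\<^sup>L M (\<lambda>x. kappa Bk (gaudin_lax S m zpos J w x) (gaudin_lax S m zpos J w x)) =
    (\<Sum>\<beta>\<in>S. \<Sum>p<m \<beta>. \<Sum>\<gamma>\<in>S. \<Sum>q<m \<gamma>.
      (1 / (w - zpos \<beta>) ^ (p + 1) * (1 / (w - zpos \<gamma>) ^ (q + 1))) * integral\<^sup>L M (\<lambda>x. kappa Bk (J \<beta> p x) (J \<gamma> q x)))"
  unfolding kappa_gaudin_lax using assms
  by (intro has_bochner_integral_integral_eq has_bochner_integral_sum has_bochner_integral_mult_right
      has_bochner_integral_integrable) auto

section \<open>Holomorphic functions modulo (w - z)^n\<close>

definition cong_mod_power ::
    "complex set \<Rightarrow> complex \<Rightarrow> nat \<Rightarrow> (complex \<Rightarrow> complex) \<Rightarrow> (complex \<Rightarrow> complex) \<Rightarrow> bool" where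
  "cong_mod_power U z n f g \<longleftrightarrow> (\<exists>W. W holomorphic_on U \<and> (\<forall>w\<in>U. f w = g w + (w - z) ^ n * W w))"

lemma cong_mod_powerI:
  "W holomorphic_on U \<Longrightarrow> (\<And>w. w \<in> U \<Longrightarrow> f w = g w + (w - z) ^ n * W w) \<Longrightarrow> cong_mod_power U z n f g"
  unfolding cong_mod_power_def by blast

lemma cong_mod_power_refl: "cong_mod_power U z n f f"
  by (rule cong_mod_powerI[where W="\<lambda>_. 0"]) auto

lemma cong_mod_power_trans:
  assumes "cong_mod_power U z n f g" "cong_mod_power U z n g h"
  shows "cong_mod_power U z n f h"
proof -
  obtain W W' where W: "W holomorphic_on U" "\<forall>w\<in>U. f w = g w + (w - z) ^ n * W w"
    and W': "W' holomorphic_on U" "\<forall>w\<in>U. g w = h w + (w - z) ^ n * W' w"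
    using assms unfolding cong_mod_power_def by blast
  show ?thesis
    by (rule cong_mod_powerI[where W="\<lambda>w. W w + W' w"]) (use W W' in \<open>auto intro!: holomorphic_intros simp: algebra_simps\<close>)
qed

lemma cong_mod_power_add:
  assumes "cong_mod_power U z n f g" "cong_mod_power U z n f' g'"
  shows "cong_mod_power U z n (\<lambda>w. f w + f' w) (\<lambda>w. g w + g' w)"
proof -
  obtain W W' where W: "W holomorphic_on U" "\<forall>w\<in>U. f w = g w + (w - z) ^ n * W w"
    and W': "W' holomorphic_on U" "\<forall>w\<in>U. f' w = g' w + (w - z) ^ n * W' w"
    using assms unfolding cong_mod_power_def by blast
  show ?thesis
    by (rule cong_mod_powerI[where W="\<lambda>w. W w + W' w"]) (use W W' in \<open>auto intro!: holomorphic_intros simp: algebra_simps\<close>)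
qed

lemma cong_mod_power_diff:
  assumes "cong_mod_power U z n f g" "cong_mod_power U z n f' g'"
  shows "cong_mod_power U z n (\<lambda>w. f w - f' w) (\<lambda>w. g w - g' w)"
proof -
  obtain W W' where W: "W holomorphic_on U" "\<forall>w\<in>U. f w = g w + (w - z) ^ n * W w"
    and W': "W' holomorphic_on U" "\<forall>w\<in>U. f' w = g' w + (w - z) ^ n * W' w"
    using assms unfolding cong_mod_power_def by blast
  show ?thesis
    by (rule cong_mod_powerI[where W="\<lambda>w. W w - W' w"]) (use W W' in \<open>auto intro!: holomorphic_intros simp: algebra_simps\<close>)
qed

lemma cong_mod_power_cmult:
  assumes "cong_mod_power U z n f g"
  shows "cong_mod_power U z n (\<lambda>w. c * f w) (\<lambda>w. c * g w)"
proof -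
  obtain W where W: "W holomorphic_on U" "\<forall>w\<in>U. f w = g w + (w - z) ^ n * W w"
    using assms unfolding cong_mod_power_def by blast
  show ?thesis
    by (rule cong_mod_powerI[where W="\<lambda>w. c * W w"]) (use W in \<open>auto intro!: holomorphic_intros simp: algebra_simps\<close>)
qed

lemma cong_mod_power_mult:
  assumes "f holomorphic_on U" "g' holomorphic_on U"
    and "cong_mod_power U z n f g" "cong_mod_power U z n f' g'"
  shows "cong_mod_power U z n (\<lambda>w. f w * f' w) (\<lambda>w. g w * g' w)"
proof -
  obtain W W' where W: "W holomorphic_on U" "\<forall>w\<in>U. f w = g w + (w - z) ^ n * W w"
    and W': "W' holomorphic_on U" "\<forall>w\<in>U. f' w = g' w + (w - z) ^ n * W' w"
    using assms(3,4) unfolding cong_mod_power_def by blast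
  show ?thesis
  proof (rule cong_mod_powerI[where W="\<lambda>w. f w * W' w + W w * g' w"])
    show "(\<lambda>w. f w * W' w + W w * g' w) holomorphic_on U"
      using assms(1,2) W W' by (auto intro!: holomorphic_intros)
    fix w assume "w \<in> U"
    then have "f w - g w = (w - z) ^ n * W w" "f' w - g' w = (w - z) ^ n * W' w"
      using W W' by auto
    then show "f w * f' w = g w * g' w + (w - z) ^ n * (f w * W' w + W w * g' w)"
      by (simp add: algebra_simps right_diff_distrib[symmetric] eq_diff_eq)
  qed
qed

lemma cong_mod_power_sum:
  "(\<And>i. i \<in> A \<Longrightarrow> cong_mod_power U z n (f i) (g i)) \<Longrightarrow>
    cong_mod_power U z n (\<lambda>w. \<Sum>i\<in>A. f i w) (\<lambda>w. \<Sum>i\<in>A. g i w)"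
  by (induction A rule: infinite_finite_induct) (auto intro: cong_mod_power_refl cong_mod_power_add)

lemma cong_mod_power_center:
  "cong_mod_power U z n f g \<Longrightarrow> z \<in> U \<Longrightarrow> 0 < n \<Longrightarrow> f z = g z"
  unfolding cong_mod_power_def by auto

text \<open>The pole 1 / (w - zpos \<beta>)^(p+1) multiplied by (w - zpos \<alpha>)^n; for \<beta> = \<alpha> the quotient
  is written out as a power, so that it is holomorphic at zpos \<alpha>.\<close>
definition cleared_pole :: "('s \<Rightarrow> complex) \<Rightarrow> 's \<Rightarrow> nat \<Rightarrow> 's \<Rightarrow> nat \<Rightarrow> complex \<Rightarrow> complex" where
  "cleared_pole zpos \<alpha> n \<beta> p w =
     (if \<beta> = \<alpha> then (w - zpos \<alpha>) ^ (n - 1 - p) else (w - zpos \<alpha>) ^ n / (w - zpos \<beta>) ^ (p + 1))"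

lemma pole_eq_cleared_pole:
  assumes "w \<noteq> zpos \<alpha>" and "\<beta> = \<alpha> \<Longrightarrow> p < n"
  shows "c / (w - zpos \<beta>) ^ (p + 1) = c * cleared_pole zpos \<alpha> n \<beta> p w / (w - zpos \<alpha>) ^ n"
proof (cases "\<beta> = \<alpha>")
  case True
  with assms have "n = (n - 1 - p) + (p + 1)" by simp
  then have "(w - zpos \<alpha>) ^ n = (w - zpos \<alpha>) ^ (n - 1 - p) * (w - zpos \<alpha>) ^ (p + 1)"
    by (metis power_add)
  with True assms(1) show ?thesis by (simp add: cleared_pole_def)
qed (use assms in \<open>simp add: cleared_pole_def\<close>)

lemma cleared_pole_holomorphic:
  assumes "\<beta> \<noteq> \<alpha> \<Longrightarrow> zpos \<beta> \<notin> U"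
  shows "cleared_pole zpos \<alpha> n \<beta> p holomorphic_on U"
  unfolding cleared_pole_def using assms by (cases "\<beta> = \<alpha>") (auto intro!: holomorphic_intros)

lemma cleared_pole_cong:
  assumes "\<beta> \<noteq> \<alpha> \<Longrightarrow> zpos \<beta> \<notin> U"
  shows "cong_mod_power U (zpos \<alpha>) n (cleared_pole zpos \<alpha> n \<beta> p)
    (\<lambda>w. if \<beta> = \<alpha> then (w - zpos \<alpha>) ^ (n - 1 - p) else 0)"
proof (cases "\<beta> = \<alpha>")
  case True
  then show ?thesis by (simp add: cleared_pole_def[abs_def] cong_mod_power_refl)
next
  case False
  show ?thesis
    by (rule cong_mod_powerI[where W="\<lambda>w. 1 / (w - zpos \<beta>) ^ (p + 1)"])
      (use False assms in \<open>auto intro!: holomorphic_intros simp: cleared_pole_def\<close>)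
qed

lemma sum_site_delta:
  assumes "finite S" "\<alpha> \<in> S"
  shows "(\<Sum>\<beta>\<in>S. \<Sum>p<m \<beta>. if \<beta> = \<alpha> then f \<beta> p else 0) = (\<Sum>p<m \<alpha>. f \<alpha> p)"
proof -
  have "(\<Sum>\<beta>\<in>S. \<Sum>p<m \<beta>. if \<beta> = \<alpha> then f \<beta> p else 0) = (\<Sum>\<beta>\<in>S. if \<beta> = \<alpha> then \<Sum>p<m \<beta>. f \<beta> p else 0)"
    by (intro sum.cong) auto
  then show ?thesis using assms by simp
qed

lemma cong_mod_power_cleared_pole_linear:
  assumes "finite S" "\<alpha> \<in> S" and "\<And>\<beta>. \<beta> \<in> S \<Longrightarrow> \<beta> \<noteq> \<alpha> \<Longrightarrow> zpos \<beta> \<notin> U"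
  shows "cong_mod_power U (zpos \<alpha>) n
    (\<lambda>w. \<Sum>\<beta>\<in>S. \<Sum>p<m \<beta>. c \<beta> p * cleared_pole zpos \<alpha> n \<beta> p w)
    (\<lambda>w. \<Sum>p<m \<alpha>. c \<alpha> p * (w - zpos \<alpha>) ^ (n - 1 - p))"
proof -
  have "cong_mod_power U (zpos \<alpha>) n
    (\<lambda>w. \<Sum>\<beta>\<in>S. \<Sum>p<m \<beta>. c \<beta> p * cleared_pole zpos \<alpha> n \<beta> p w)
    (\<lambda>w. \<Sum>\<beta>\<in>S. \<Sum>p<m \<beta>. c \<beta> p * (if \<beta> = \<alpha> then (w - zpos \<alpha>) ^ (n - 1 - p) else 0))"
    using assms(3) by (intro cong_mod_power_sum cong_mod_power_cmult cleared_pole_cong) auto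
  moreover have "(\<Sum>\<beta>\<in>S. \<Sum>p<m \<beta>. c \<beta> p * (if \<beta> = \<alpha> then (w - zpos \<alpha>) ^ (n - 1 - p) else 0))
      = (\<Sum>p<m \<alpha>. c \<alpha> p * (w - zpos \<alpha>) ^ (n - 1 - p))" for w
  proof -
    have "(\<Sum>\<beta>\<in>S. \<Sum>p<m \<beta>. c \<beta> p * (if \<beta> = \<alpha> then (w - zpos \<alpha>) ^ (n - 1 - p) else 0))
      = (\<Sum>\<beta>\<in>S. \<Sum>p<m \<beta>. if \<beta> = \<alpha> then c \<beta> p * (w - zpos \<alpha>) ^ (n - 1 - p) else 0)"
      by (intro sum.cong) auto
    then show ?thesis by (simp add: sum_site_delta assms(1,2))
  qed
  ultimately show ?thesis by simp
qed

lemma cong_mod_power_cleared_pole_quadratic: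
  assumes "finite S" "\<alpha> \<in> S" and "\<And>\<beta>. \<beta> \<in> S \<Longrightarrow> \<beta> \<noteq> \<alpha> \<Longrightarrow> zpos \<beta> \<notin> U"
  shows "cong_mod_power U (zpos \<alpha>) n
    (\<lambda>w. \<Sum>\<beta>\<in>S. \<Sum>p<m \<beta>. \<Sum>\<gamma>\<in>S. \<Sum>q<m \<gamma>.
       c \<beta> p \<gamma> q * (cleared_pole zpos \<alpha> n \<beta> p w * cleared_pole zpos \<alpha> n \<gamma> q w))
    (\<lambda>w. \<Sum>p<m \<alpha>. \<Sum>q<m \<alpha>. c \<alpha> p \<alpha> q * ((w - zpos \<alpha>) ^ (n - 1 - p) * (w - zpos \<alpha>) ^ (n - 1 - q)))"
proof -
  let ?e = "\<lambda>\<beta> p w. if \<beta> = \<alpha> then (w - zpos \<alpha>) ^ (n - 1 - p) else 0"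
  have e_hol: "?e \<beta> p holomorphic_on U" for \<beta> p
    by (cases "\<beta> = \<alpha>") (auto intro!: holomorphic_intros)
  have "cong_mod_power U (zpos \<alpha>) n
    (\<lambda>w. \<Sum>\<beta>\<in>S. \<Sum>p<m \<beta>. \<Sum>\<gamma>\<in>S. \<Sum>q<m \<gamma>.
       c \<beta> p \<gamma> q * (cleared_pole zpos \<alpha> n \<beta> p w * cleared_pole zpos \<alpha> n \<gamma> q w))
    (\<lambda>w. \<Sum>\<beta>\<in>S. \<Sum>p<m \<beta>. \<Sum>\<gamma>\<in>S. \<Sum>q<m \<gamma>. c \<beta> p \<gamma> q * (?e \<beta> p w * ?e \<gamma> q w))"
    using assms(3)
    by (intro cong_mod_power_sum cong_mod_power_cmult cong_mod_power_mult cleared_pole_cong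
        cleared_pole_holomorphic e_hol) auto
  moreover have "(\<Sum>\<beta>\<in>S. \<Sum>p<m \<beta>. \<Sum>\<gamma>\<in>S. \<Sum>q<m \<gamma>. c \<beta> p \<gamma> q * (?e \<beta> p w * ?e \<gamma> q w))
      = (\<Sum>p<m \<alpha>. \<Sum>q<m \<alpha>. c \<alpha> p \<alpha> q * ((w - zpos \<alpha>) ^ (n - 1 - p) * (w - zpos \<alpha>) ^ (n - 1 - q)))" for w
  proof -
    have "(\<Sum>\<beta>\<in>S. \<Sum>p<m \<beta>. \<Sum>\<gamma>\<in>S. \<Sum>q<m \<gamma>. c \<beta> p \<gamma> q * (?e \<beta> p w * ?e \<gamma> q w))
      = (\<Sum>\<beta>\<in>S. \<Sum>p<m \<beta>. if \<beta> = \<alpha> then \<Sum>\<gamma>\<in>S. \<Sum>q<m \<gamma>. if \<gamma> = \<alpha> then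
           c \<beta> p \<gamma> q * ((w - zpos \<alpha>) ^ (n - 1 - p) * (w - zpos \<alpha>) ^ (n - 1 - q)) else 0 else 0)"
      by (auto intro!: sum.cong)
    then show ?thesis by (simp add: sum_site_delta assms(1,2))
  qed
  ultimately show ?thesis by simp
qed

section \<open>Regularity at a site\<close>

locale gaudin_site =
  fixes S :: "'s set" and m :: "'s \<Rightarrow> nat" and lev :: "'s \<Rightarrow> nat \<Rightarrow> complex"
    and zpos :: "'s \<Rightarrow> complex" and linf :: real and Bk :: "complex^'n^'n" and M :: "real measure"
    and J :: "'s \<Rightarrow> nat \<Rightarrow> real \<Rightarrow> complex^'n" and \<alpha> :: 's
  assumes finite_sites: "finite S"
    and site: "\<alpha> \<in> S"
    and order_pos: "0 < m \<alpha>"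
    and top_level: "lev \<alpha> (m \<alpha> - 1) \<noteq> 0"
    and zpos_inj: "inj_on zpos S"
    and integrable: "\<forall>\<beta>\<in>S. \<forall>\<gamma>\<in>S. \<forall>p<m \<beta>. \<forall>q<m \<gamma>.
      integrable M (\<lambda>x. kappa Bk (J \<beta> p x) (J \<gamma> q x))"
begin

definition nbhd :: "complex set" where
  "nbhd = - zpos ` (S - {\<alpha>})"

lemma open_nbhd: "open nbhd"
  unfolding nbhd_def using finite_sites by (auto intro!: finite_imp_closed)

lemma site_in_nbhd: "zpos \<alpha> \<in> nbhd"
  using zpos_inj site by (auto simp: nbhd_def inj_on_def)

lemma other_site_notin_nbhd: "\<beta> \<in> S \<Longrightarrow> \<beta> \<noteq> \<alpha> \<Longrightarrow> zpos \<beta> \<notin> nbhd"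
  by (simp add: nbhd_def)

abbreviation cleared :: "'s \<Rightarrow> nat \<Rightarrow> complex \<Rightarrow> complex" where
  "cleared \<equiv> cleared_pole zpos \<alpha> (m \<alpha>)"

definition pairing :: "'s \<Rightarrow> nat \<Rightarrow> 's \<Rightarrow> nat \<Rightarrow> complex" where
  "pairing \<beta> p \<gamma> q = integral\<^sup>L M (\<lambda>x. kappa Bk (J \<beta> p x) (J \<gamma> q x))"

definition twist_numerator :: "complex \<Rightarrow> complex" where
  "twist_numerator w =
     (\<Sum>\<beta>\<in>S. \<Sum>p<m \<beta>. lev \<beta> p * cleared \<beta> p w) - of_real linf * (w - zpos \<alpha>) ^ m \<alpha>"

definition energy_numerator :: "complex \<Rightarrow> complex" where
  "energy_numerator w =
     (\<Sum>\<beta>\<in>S. \<Sum>p<m \<beta>. \<Sum>\<gamma>\<in>S. \<Sum>q<m \<gamma>. pairing \<beta> p \<gamma> q * (cleared \<beta> p w * cleared \<gamma> q w))"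

definition charge_numerator :: "complex \<Rightarrow> complex" where
  "charge_numerator w = (\<Sum>\<beta>\<in>S. \<Sum>p<m \<beta>. charge_D M Bk m lev J \<beta> p * cleared \<beta> p w)"

lemma pole_eq_cleared:
  assumes "w \<noteq> zpos \<alpha>" "\<beta> \<in> S" "p < m \<beta>"
  shows "c / (w - zpos \<beta>) ^ (p + 1) = c * cleared \<beta> p w / (w - zpos \<alpha>) ^ m \<alpha>"
  using assms by (intro pole_eq_cleared_pole) auto

lemma twist_eq:
  assumes "w \<noteq> zpos \<alpha>"
  shows "twist S m lev zpos linf w = twist_numerator w / (w - zpos \<alpha>) ^ m \<alpha>"
proof -
  have "twist S m lev zpos linf w = (\<Sum>\<beta>\<in>S. \<Sum>p<m \<beta>. lev \<beta> p * cleared \<beta> p w) / (w - zpos \<alpha>) ^ m \<alpha> - of_real linf"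
    unfolding twist_def sum_divide_distrib
    by (intro arg_cong2[where f=minus] sum.cong refl) (simp_all only: pole_eq_cleared[OF assms] lessThan_iff)
  then show ?thesis using assms by (simp add: twist_numerator_def field_simps)
qed

lemma charge_sum_eq:
  assumes "w \<noteq> zpos \<alpha>"
  shows "(\<Sum>\<beta>\<in>S. \<Sum>p<m \<beta>. charge_D M Bk m lev J \<beta> p / (w - zpos \<beta>) ^ (p + 1))
    = charge_numerator w / (w - zpos \<alpha>) ^ m \<alpha>"
  unfolding charge_numerator_def sum_divide_distrib
  by (intro sum.cong refl) (simp only: pole_eq_cleared[OF assms] lessThan_iff)

lemma energy_eq:
  assumes "w \<noteq> zpos \<alpha>"
  shows "integral\<^sup>L M (\<lambda>x. kappa Bk (gaudin_lax S m zpos J w x) (gaudin_lax S m zpos J w x))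
    = energy_numerator w / ((w - zpos \<alpha>) ^ m \<alpha> * (w - zpos \<alpha>) ^ m \<alpha>)"
  unfolding integral_kappa_gaudin_lax[OF integrable] energy_numerator_def sum_divide_distrib
  by (intro sum.cong refl) (simp only: pole_eq_cleared[OF assms] lessThan_iff, simp add: pairing_def)

lemma cleared_holomorphic: "\<beta> \<in> S \<Longrightarrow> cleared \<beta> p holomorphic_on nbhd"
  by (rule cleared_pole_holomorphic) (use other_site_notin_nbhd in auto)

lemma twist_numerator_holomorphic: "twist_numerator holomorphic_on nbhd"
  unfolding twist_numerator_def[abs_def] using cleared_holomorphic
  by (auto intro!: holomorphic_intros)

lemma twist_numerator_cong:
  "cong_mod_power nbhd (zpos \<alpha>) (m \<alpha>) twist_numerator (\<lambda>w. poly (rev_poly (m \<alpha>) (lev \<alpha>)) (w - zpos \<alpha>))"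
proof -
  have "cong_mod_power nbhd (zpos \<alpha>) (m \<alpha>) twist_numerator
      (\<lambda>w. (\<Sum>p<m \<alpha>. lev \<alpha> p * (w - zpos \<alpha>) ^ (m \<alpha> - 1 - p)) - 0)"
    unfolding twist_numerator_def[abs_def]
    by (intro cong_mod_power_diff cong_mod_power_cleared_pole_linear finite_sites site other_site_notin_nbhd
        cong_mod_powerI[where W="\<lambda>_. of_real linf"]) (auto simp: mult.commute)
  then show ?thesis by (simp add: poly_rev_poly)
qed

lemma energy_numerator_cong:
  "cong_mod_power nbhd (zpos \<alpha>) (m \<alpha>) energy_numerator
    (\<lambda>w. \<Sum>p<m \<alpha>. \<Sum>q<m \<alpha>. pairing \<alpha> p \<alpha> q * ((w - zpos \<alpha>) ^ (m \<alpha> - 1 - p) * (w - zpos \<alpha>) ^ (m \<alpha> - 1 - q)))"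
  unfolding energy_numerator_def[abs_def]
  by (intro cong_mod_power_cleared_pole_quadratic finite_sites site other_site_notin_nbhd)

lemma charge_numerator_cong:
  "cong_mod_power nbhd (zpos \<alpha>) (m \<alpha>) charge_numerator
    (\<lambda>w. \<Sum>p<m \<alpha>. charge_D M Bk m lev J \<alpha> p * (w - zpos \<alpha>) ^ (m \<alpha> - 1 - p))"
  unfolding charge_numerator_def[abs_def]
  by (intro cong_mod_power_cleared_pole_linear finite_sites site other_site_notin_nbhd)

lemma twist_numerator_at_site: "twist_numerator (zpos \<alpha>) = lev \<alpha> (m \<alpha> - 1)"
  using cong_mod_power_center[OF twist_numerator_cong site_in_nbhd order_pos] order_pos
  by (simp add: poly_0_coeff_0 coeff_rev_poly)

lemma numerator_divisible:
  obtains N where "N holomorphic_on nbhd" and "\<And>w. w \<in> nbhd \<Longrightarrow>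
    - (1/2) * energy_numerator w + twist_numerator w * charge_numerator w = (w - zpos \<alpha>) ^ m \<alpha> * N w"
proof -
  have \<eta>: "eta_system (m \<alpha>) (lev \<alpha>) (eta_coeffs (m \<alpha>) (lev \<alpha>))"
    using order_pos top_level by (rule eta_coeffs_eta_system)
  obtain W where W: "\<And>u. - (1/2) * (\<Sum>q<m \<alpha>. \<Sum>r<m \<alpha>. pairing \<alpha> q \<alpha> r * (u ^ (m \<alpha> - 1 - q) * u ^ (m \<alpha> - 1 - r)))
      + poly (rev_poly (m \<alpha>) (lev \<alpha>)) u * (\<Sum>p<m \<alpha>. charge_D M Bk m lev J \<alpha> p * u ^ (m \<alpha> - 1 - p))
    = u ^ m \<alpha> * poly W u"
    using charge_principal_identity[OF order_pos top_level \<eta>, of "\<lambda>q r. pairing \<alpha> q \<alpha> r"]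
    unfolding charge_D_def pairing_def by blast
  have "cong_mod_power nbhd (zpos \<alpha>) (m \<alpha>)
      (\<lambda>w. - (1/2) * energy_numerator w + twist_numerator w * charge_numerator w)
      (\<lambda>w. (w - zpos \<alpha>) ^ m \<alpha> * poly W (w - zpos \<alpha>))"
    unfolding W[symmetric]
    by (intro cong_mod_power_add cong_mod_power_cmult cong_mod_power_mult energy_numerator_cong
        twist_numerator_cong charge_numerator_cong twist_numerator_holomorphic)
      (auto intro!: holomorphic_intros)
  moreover have "cong_mod_power nbhd (zpos \<alpha>) (m \<alpha>) (\<lambda>w. (w - zpos \<alpha>) ^ m \<alpha> * poly W (w - zpos \<alpha>)) (\<lambda>_. 0)"
    by (rule cong_mod_powerI[where W="\<lambda>w. poly W (w - zpos \<alpha>)"]) (auto intro!: holomorphic_intros)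
  ultimately have "cong_mod_power nbhd (zpos \<alpha>) (m \<alpha>)
      (\<lambda>w. - (1/2) * energy_numerator w + twist_numerator w * charge_numerator w) (\<lambda>_. 0)"
    by (rule cong_mod_power_trans)
  then show ?thesis
    using that unfolding cong_mod_power_def by auto
qed

lemma charge_Q_regular_at_site:
  obtains U G where "open U" "zpos \<alpha> \<in> U" "G holomorphic_on U"
    and "\<And>w. w \<in> U - {zpos \<alpha>} \<Longrightarrow> w \<notin> zpos ` S \<and>
      charge_Q M Bk S m lev zpos linf J w
        + (\<Sum>\<beta>\<in>S. \<Sum>p<m \<beta>. charge_D M Bk m lev J \<beta> p / (w - zpos \<beta>) ^ (p + 1)) = G w"
proof -
  obtain N where N: "N holomorphic_on nbhd" and N_eq: "\<And>w. w \<in> nbhd \<Longrightarrow>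
    - (1/2) * energy_numerator w + twist_numerator w * charge_numerator w = (w - zpos \<alpha>) ^ m \<alpha> * N w"
    using numerator_divisible by blast
  define U where "U = nbhd \<inter> twist_numerator -` (- {0})"
  have "open U"
    unfolding U_def using twist_numerator_holomorphic open_nbhd
    by (intro continuous_open_preimage holomorphic_on_imp_continuous_on) auto
  moreover have "zpos \<alpha> \<in> U"
    using site_in_nbhd twist_numerator_at_site top_level by (simp add: U_def)
  moreover have "(\<lambda>w. N w / twist_numerator w) holomorphic_on U"
    using N twist_numerator_holomorphic by (auto simp: U_def intro!: holomorphic_intros elim: holomorphic_on_subset)
  moreover have "w \<notin> zpos ` S \<and>
      charge_Q M Bk S m lev zpos linf J w
        + (\<Sum>\<beta>\<in>S. \<Sum>p<m \<beta>. charge_D M Bk m lev J \<beta> p / (w - zpos \<beta>) ^ (p + 1))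
      = N w / twist_numerator w" if w: "w \<in> U - {zpos \<alpha>}" for w
  proof
    show "w \<notin> zpos ` S"
      using w by (auto simp: U_def nbhd_def)
    have wz: "w \<noteq> zpos \<alpha>" and tw: "twist_numerator w \<noteq> 0" and "w \<in> nbhd"
      using w by (auto simp: U_def)
    from N_eq[OF this(3)] wz tw show "charge_Q M Bk S m lev zpos linf J w
        + (\<Sum>\<beta>\<in>S. \<Sum>p<m \<beta>. charge_D M Bk m lev J \<beta> p / (w - zpos \<beta>) ^ (p + 1))
      = N w / twist_numerator w"
      unfolding charge_Q_def twist_eq[OF wz] energy_eq[OF wz] charge_sum_eq[OF wz]
      by (simp add: field_simps)
  qed
  ultimately show ?thesis using that by blast
qed

end

lemma holomorphic_extension_at_points:
  fixes F :: "complex \<Rightarrow> complex"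
  assumes "\<And>a. a \<in> A \<Longrightarrow> \<exists>U G. open U \<and> a \<in> U \<and> G holomorphic_on U \<and> (\<forall>w\<in>U - {a}. w \<notin> A \<and> F w = G w)"
  shows "\<exists>H. (\<forall>w. w \<notin> A \<longrightarrow> H w = F w) \<and> (\<forall>a\<in>A. \<exists>r>0. H holomorphic_on ball a r)"
proof -
  obtain U G where UG: "\<And>a. a \<in> A \<Longrightarrow>
      open (U a) \<and> a \<in> U a \<and> G a holomorphic_on U a \<and> (\<forall>w\<in>U a - {a}. w \<notin> A \<and> F w = G a w)"
    using assms by metis
  define H where "H w = (if w \<in> A then G w w else F w)" for w
  have "\<exists>r>0. H holomorphic_on ball a r" if a: "a \<in> A" for a
  proof -
    have "open (U a)" "a \<in> U a" and hol: "G a holomorphic_on U a"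
      and eq: "\<forall>w\<in>U a - {a}. w \<notin> A \<and> F w = G a w"
      using UG[OF a] by auto
    then obtain r where r: "r > 0" "ball a r \<subseteq> U a"
      using openE by blast
    have "G a w = H w" if "w \<in> ball a r" for w
      using eq r(2) that by (cases "w = a") (auto simp: H_def a)
    with holomorphic_on_subset[OF hol r(2)] have "H holomorphic_on ball a r"
      by (rule holomorphic_transform)
    with r(1) show ?thesis by blast
  qed
  then show ?thesis by (intro exI[of _ H]) (auto simp: H_def)
qed

theorem propositionA3:
  fixes S :: "'s set" and bar :: "'s \<Rightarrow> 's" and m :: "'s \<Rightarrow> nat"
    and lev :: "'s \<Rightarrow> nat \<Rightarrow> complex" and zpos :: "'s \<Rightarrow> complex" and linf :: real
    and Bk :: "complex^'n^'n" and M :: "real measure"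
    and J :: "'s \<Rightarrow> nat \<Rightarrow> real \<Rightarrow> complex^'n"
  assumes finS: "finite S"
    and bar_in: "\<forall>\<alpha>\<in>S. bar \<alpha> \<in> S \<and> bar (bar \<alpha>) = \<alpha>"
    and bar_m: "\<forall>\<alpha>\<in>S. m (bar \<alpha>) = m \<alpha>"
    and bar_z: "\<forall>\<alpha>\<in>S. zpos (bar \<alpha>) = cnj (zpos \<alpha>)"
    and bar_lev: "\<forall>\<alpha>\<in>S. \<forall>p. lev (bar \<alpha>) p = cnj (lev \<alpha> p)"
    and m_pos: "\<forall>\<alpha>\<in>S. 1 \<le> m \<alpha>"
    and lev_top: "\<forall>\<alpha>\<in>S. lev \<alpha> (m \<alpha> - 1) \<noteq> 0"
    and z_inj: "inj_on zpos S"
    and linf_nz: "linf \<noteq> 0"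
    and Bk_sym: "transpose Bk = Bk"
    and integrable: "\<forall>\<alpha>\<in>S. \<forall>\<beta>\<in>S. \<forall>p<m \<alpha>. \<forall>q<m \<beta>.
                       integrable M (\<lambda>x. kappa Bk (J \<alpha> p x) (J \<beta> q x))"
  shows "\<exists>Qreg :: complex \<Rightarrow> complex.
           (\<forall>w. w \<notin> zpos ` S \<and> twist S m lev zpos linf w \<noteq> 0 \<longrightarrow>
              charge_Q M Bk S m lev zpos linf J w =
                - (\<Sum>\<alpha>\<in>S. \<Sum>p<m \<alpha>. charge_D M Bk m lev J \<alpha> p / (w - zpos \<alpha>) ^ (p + 1))
                + Qreg w)
         \<and> (\<forall>\<alpha>\<in>S. \<exists>r>0. Qreg holomorphic_on ball (zpos \<alpha>) r)"
proof -
  let ?F = "\<lambda>w. charge_Q M Bk S m lev zpos linf J w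
    + (\<Sum>\<alpha>\<in>S. \<Sum>p<m \<alpha>. charge_D M Bk m lev J \<alpha> p / (w - zpos \<alpha>) ^ (p + 1))"
  have "\<exists>U G. open U \<and> a \<in> U \<and> G holomorphic_on U \<and> (\<forall>w\<in>U - {a}. w \<notin> zpos ` S \<and> ?F w = G w)"
    if a: "a \<in> zpos ` S" for a
  proof -
    obtain \<alpha> where \<alpha>: "\<alpha> \<in> S" "a = zpos \<alpha>" using a by blast
    interpret gaudin_site S m lev zpos linf Bk M J \<alpha>
      using finS \<alpha>(1) m_pos lev_top z_inj integrable by unfold_locales auto
    obtain U G where "open U" "zpos \<alpha> \<in> U" "G holomorphic_on U"
      "\<And>w. w \<in> U - {zpos \<alpha>} \<Longrightarrow> w \<notin> zpos ` S \<and> ?F w = G w"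
      by (rule charge_Q_regular_at_site) auto
    then show ?thesis unfolding \<alpha>(2) by blast
  qed
  then obtain Qreg where "\<forall>w. w \<notin> zpos ` S \<longrightarrow> Qreg w = ?F w"
    and "\<forall>a\<in>zpos ` S. \<exists>r>0. Qreg holomorphic_on ball a r"
    using holomorphic_extension_at_points[of "zpos ` S" ?F] by blast
  then show ?thesis by (intro exI[of _ Qreg]) auto
qed

end
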